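(* For every path $\pi$, every message $t$ and all $i,k\in\mathbb{N}$ with $i\le k$: if $\pi(k)$ has $t$, then either $\pi(i)$ is a subterm of $\pi(k)$, or there exists $j\in\mathbb{N}$ with $i\le j<k$ and $\pi(j+1)=\mathrm{ex}(t,\pi(j))$.
   Context: Messages form a set $\mathcal{T}$ (terms of a cryptographic message algebra; only their identity matters here). TPM machine states are the terms of sort $\mathsf{M}$ generated by a constant $\mathrm{bt}$ (boot) and a constructor $\mathrm{ex}:\mathcal{T}\times\mathsf{M}\to\mathsf{M}$ (extend); these are free constructors, so distinct terms are distinct states. The TPM transition relation $\leadsto$ on states is defined by: $m_0\leadsto m_1$ iff $m_1=\mathrm{bt}$, or $m_1=\mathrm{ex}(t,m_0)$ for some message $t$, or $m_0=m_1$. A path is an infinite sequence $\pi:\mathbb{N}\to\mathsf{M}$ with $\pi(0)=\mathrm{bt}$ and $\pi(i)\leadsto\pi(i+1)$ for all $i$. A state $m$ has a message $t$ if some state of the form $\mathrm{ex}(t,m')$ is a subterm of $m$ (e.g. $\mathrm{ex}(\text{obtain},\mathrm{ex}(v,\mathrm{bt}))$ has obtain and $v$ but not refuse). For states, $m$ is a subterm of $m'$ means $m'=\mathrm{ex}(t_1,\mathrm{ex}(t_2,\dots\mathrm{ex}(t_r,m)\dots))$ for some $r\ge 0$ and messages $t_1,\dots,t_r$. *)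

theory Defs
  imports Main
begin

datatype 'msg state = bt | ex 'msg "'msg state"

definition tpm_trans :: "'msg state \<Rightarrow> 'msg state \<Rightarrow> bool" where
  "tpm_trans m0 m1 \<longleftrightarrow> m1 = bt \<or> (\<exists>t. m1 = ex t m0) \<or> m0 = m1"

definition is_path :: "(nat \<Rightarrow> 'msg state) \<Rightarrow> bool" where
  "is_path \<pi> \<longleftrightarrow> \<pi> 0 = bt \<and> (\<forall>i. tpm_trans (\<pi> i) (\<pi> (Suc i)))"

inductive subterm :: "'msg state \<Rightarrow> 'msg state \<Rightarrow> bool" where
  subterm_refl: "subterm m m"
| subterm_ex: "subterm m m' \<Longrightarrow> subterm m (ex t m')"

definition has_msg :: "'msg state \<Rightarrow> 'msg \<Rightarrow> bool" where
  "has_msg m t \<longleftrightarrow> (\<exists>m'. subterm (ex t m') m)"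

end

theory Submission
  imports Defs
begin

(* Follow the path backwards from step k to step i.  A single
   transition m0 \<leadsto> m1 into a state that has t is of one of two kinds:
   either it is the extension m1 = ex t m0 itself, or m0 already has t and
   m0 is a subterm of m1 (a reboot cannot produce t, a stutter step and an
   extension by another message keep m0 as a subterm and lose nothing).
   Hence, inducting on k, either some step in [i, k) extends by t, or all of
   them are of the second kind and transitivity of the subterm relation
   gives that the state at i is a subterm of the state at k.
   The file first records the algebra of subterm and has_msg, then the
   one-step lemma, then the statement for arbitrary sequences of
   transitions; the theorem lemma1 is its special case for paths. *)

lemma subterm_trans:
  assumes "subterm a b" and "subterm b c"
  shows "subterm a c"
  using assms(2,1) by (induction rule: subterm.induct) (simp_all add: subterm_ex)

lemma subterm_ex_self: "subterm m (ex t m)"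
  by (intro subterm_ex subterm_refl)

lemma has_msg_bt: "\<not> has_msg bt t"
proof
  assume "has_msg bt t"
  then obtain m' where "subterm (ex t m') bt"
    unfolding has_msg_def by blast
  then show False by (cases rule: subterm.cases)
qed

lemma has_msg_ex: "has_msg (ex t' m) t \<longleftrightarrow> t = t' \<or> has_msg m t"
proof
  assume "has_msg (ex t' m) t"
  then obtain m' where "subterm (ex t m') (ex t' m)"
    unfolding has_msg_def by blast
  then show "t = t' \<or> has_msg m t"
    by (cases rule: subterm.cases) (auto simp: has_msg_def)
next
  assume "t = t' \<or> has_msg m t"
  then show "has_msg (ex t' m) t"
    by (auto simp: has_msg_def intro: subterm_refl subterm_ex)
qed

lemma tpm_trans_has_msg:
  assumes "tpm_trans m0 m1" and "has_msg m1 t"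
  shows "m1 = ex t m0 \<or> (has_msg m0 t \<and> subterm m0 m1)"
proof -
  consider (boot) "m1 = bt" | (extend) t' where "m1 = ex t' m0" | (stutter) "m1 = m0"
    using assms(1) unfolding tpm_trans_def by blast
  then show ?thesis
  proof cases
    case boot
    with assms(2) have False by (simp add: has_msg_bt)
    then show ?thesis ..
  next
    case (extend t')
    then show ?thesis using assms(2) by (auto simp: has_msg_ex subterm_ex_self)
  next
    case stutter
    then show ?thesis using assms(2) by (simp add: subterm_refl)
  qed
qed

lemma transitions_has_msg:
  fixes \<pi> :: "nat \<Rightarrow> 'msg state"
  assumes trans: "\<And>j. tpm_trans (\<pi> j) (\<pi> (Suc j))"
    and "i \<le> k" and "has_msg (\<pi> k) t"
  shows "subterm (\<pi> i) (\<pi> k) \<or> (\<exists>j. i \<le> j \<and> j < k \<and> \<pi> (Suc j) = ex t (\<pi> j))"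
  using assms(2,3)
proof (induction k rule: dec_induct)
  case base
  then show ?case by (simp add: subterm_refl)
next
  case (step k)
  from tpm_trans_has_msg[OF trans step.prems]
  consider (extend) "\<pi> (Suc k) = ex t (\<pi> k)"
    | (keep) "has_msg (\<pi> k) t" and "subterm (\<pi> k) (\<pi> (Suc k))"
    by blast
  then show ?case
  proof cases
    case extend
    then show ?thesis using step.hyps by blast
  next
    case keep
    from step.IH[OF keep(1)] show ?thesis
    proof
      assume "subterm (\<pi> i) (\<pi> k)"
      then show ?thesis using subterm_trans[OF _ keep(2)] by blast
    next
      assume "\<exists>j. i \<le> j \<and> j < k \<and> \<pi> (Suc j) = ex t (\<pi> j)"
      then show ?thesis using less_SucI by blast
    qed
  qed
qed

theorem lemma1:
  fixes \<pi> :: "nat \<Rightarrow> 'msg state" and t :: 'msg and i k :: nat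
  assumes "is_path \<pi>" and "i \<le> k" and "has_msg (\<pi> k) t"
  shows "subterm (\<pi> i) (\<pi> k) \<or> (\<exists>j. i \<le> j \<and> j < k \<and> \<pi> (Suc j) = ex t (\<pi> j))"
proof -
  have "\<And>j. tpm_trans (\<pi> j) (\<pi> (Suc j))"
    using assms(1) unfolding is_path_def by blast
  then show ?thesis using assms(2,3) by (rule transitions_has_msg)
qed

end
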